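(* Let $K$ be a finite field and $G$ a finite group. Every maximal right ideal of $KG$ is checkable.
   Context: A right ideal $I\le KG$ is called checkable if there is $v\in KG$ with $I=\{a\in KG: va=0\}$. *)

theory Defs
  imports Main
begin

text \<open>Group algebra KG of a finite group G (a type of class group_add, the group
operation written additively, not assumed commutative) over a field K:
elements are functions G \<Rightarrow> K, product is convolution
(a*b)(x) = sum over y of a(y) b(y^-1 x).\<close>

definition gconv :: "('g::{group_add,finite} \<Rightarrow> 'k::comm_ring_1) \<Rightarrow> ('g \<Rightarrow> 'k) \<Rightarrow> 'g \<Rightarrow> 'k" where
  "gconv a b = (\<lambda>x. \<Sum>y\<in>UNIV. a y * b (- y + x))"

definition right_ideal :: "(('g::{group_add,finite} \<Rightarrow> 'k::comm_ring_1)) set \<Rightarrow> bool" where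
  "right_ideal I \<longleftrightarrow>
     (\<lambda>_. 0) \<in> I \<and>
     (\<forall>a\<in>I. \<forall>b\<in>I. (\<lambda>x. a x + b x) \<in> I) \<and>
     (\<forall>a\<in>I. (\<lambda>x. - a x) \<in> I) \<and>
     (\<forall>a\<in>I. \<forall>r. gconv a r \<in> I)"

definition maximal_right_ideal :: "(('g::{group_add,finite} \<Rightarrow> 'k::comm_ring_1)) set \<Rightarrow> bool" where
  "maximal_right_ideal I \<longleftrightarrow> right_ideal I \<and> I \<noteq> UNIV \<and>
     (\<forall>J. right_ideal J \<and> I \<subseteq> J \<longrightarrow> J = I \<or> J = UNIV)"

definition checkable :: "(('g::{group_add,finite} \<Rightarrow> 'k::comm_ring_1)) set \<Rightarrow> bool" where
  "checkable I \<longleftrightarrow> (\<exists>v. I = {a. gconv v a = (\<lambda>_. 0)})"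

end

theory Submission
  imports Defs "HOL-Library.Function_Algebras" "HOL.Vector_Spaces"
begin

text \<open>A maximal right ideal \<open>I\<close> is a proper \<open>K\<close>-subspace of \<open>KG\<close>, so some nonzero
  \<open>c : G \<rightarrow> K\<close> is orthogonal to \<open>I\<close> under the pairing \<open>\<langle>a, c\<rangle> = \<Sum>\<^sub>y a(y) c(y)\<close>.
  Put \<open>v(y) = c(-y)\<close>. Then \<open>(v a)(x) = \<langle>a \<delta>(-x), c\<rangle>\<close>, which vanishes for \<open>a \<in> I\<close>
  because \<open>I\<close> is a right ideal. Hence \<open>I\<close> lies in the right annihilator of \<open>v\<close>, a right
  ideal that is proper since it misses the unit \<open>\<delta>\<^sub>0\<close>; by maximality the two coincide.\<close>

definition gdelta :: "'g \<Rightarrow> 'g \<Rightarrow> 'k::comm_ring_1" where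
  "gdelta g = (\<lambda>x. if x = g then 1 else 0)"

definition right_annihilator :: "('g::{group_add,finite} \<Rightarrow> 'k::comm_ring_1) \<Rightarrow> ('g \<Rightarrow> 'k) set" where
  "right_annihilator v = {a. gconv v a = (\<lambda>_. 0)}"

lemma checkable_iff_right_annihilator: "checkable I \<longleftrightarrow> (\<exists>v. I = right_annihilator v)"
  by (simp add: checkable_def right_annihilator_def)

lemma sum_fun_apply: "(\<Sum>y\<in>A. (f y :: 'a \<Rightarrow> 'b::comm_monoid_add)) x = (\<Sum>y\<in>A. f y x)"
  by (induction A rule: infinite_finite_induct) (auto simp: plus_fun_def)

lemma sum_UNIV_translate:
  fixes h :: "'g::{group_add,finite} \<Rightarrow> 'k::comm_monoid_add"
  shows "(\<Sum>z\<in>UNIV. h z) = (\<Sum>z\<in>UNIV. h (c + z))"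
  by (rule sum.reindex_bij_witness[of _ "\<lambda>z. c + z" "\<lambda>z. -c + z"])
     (auto simp: add.assoc[symmetric])

lemma fun_eq_sum_gdelta:
  fixes a :: "'g::finite \<Rightarrow> 'k::comm_ring_1"
  shows "a = (\<Sum>y\<in>UNIV. (\<lambda>x. a y * gdelta y x))"
proof
  fix x
  have "(\<Sum>y\<in>UNIV. a y * gdelta y x) = (\<Sum>y\<in>UNIV. if y = x then a y else 0)"
    by (intro sum.cong) (auto simp: gdelta_def)
  then show "a x = (\<Sum>y\<in>UNIV. (\<lambda>x. a y * gdelta y x)) x"
    by (simp add: sum_fun_apply)
qed

lemma gconv_gdelta_right:
  fixes a :: "'g::{group_add,finite} \<Rightarrow> 'k::comm_ring_1"
  shows "gconv a (gdelta g) = (\<lambda>z. a (z - g))"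
proof
  fix z
  have "\<And>y::'g. (-y + z = g) = (y = z - g)"
    by (metis minus_add_cancel ab_left_minus add_minus_cancel diff_eq_eq diff_conv_add_uminus)
  then have "gconv a (gdelta g) z = (\<Sum>y\<in>UNIV. if y = z - g then a y else 0)"
    unfolding gconv_def gdelta_def by (intro sum.cong) auto
  then show "gconv a (gdelta g) z = a (z - g)" by simp
qed

lemma gconv_gdelta_zero_right [simp]:
  fixes a :: "'g::{group_add,finite} \<Rightarrow> 'k::comm_ring_1"
  shows "gconv a (gdelta 0) = a"
  by (simp add: gconv_gdelta_right)

lemma gconv_scale_right:
  "gconv a (\<lambda>x. c * b x) = (\<lambda>x. c * gconv a b x)"
  by (simp add: gconv_def sum_distrib_left algebra_simps)

lemma gconv_add_right: "gconv v (\<lambda>x. a x + b x) = (\<lambda>x. gconv v a x + gconv v b x)"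
  by (simp add: gconv_def distrib_left sum.distrib)

lemma gconv_uminus_right: "gconv v (\<lambda>x. - a x) = (\<lambda>x. - gconv v a x)"
  by (simp add: gconv_def sum_negf)

lemma gconv_zero_right: "gconv v (\<lambda>_. 0) = (\<lambda>_. 0)"
  by (simp add: gconv_def)

lemma gconv_zero_left: "gconv (\<lambda>_. 0) a = (\<lambda>_. 0)"
  by (simp add: gconv_def)

lemma gconv_assoc:
  fixes v :: "'g::{group_add,finite} \<Rightarrow> 'k::comm_ring_1"
  shows "gconv v (gconv a r) = gconv (gconv v a) r"
proof
  fix x
  have inner: "(\<Sum>z\<in>UNIV. a z * r (- z + (- y + x))) = (\<Sum>z\<in>UNIV. a (-y + z) * r (- z + x))"
    for y
  proof -
    have "(\<Sum>z\<in>UNIV. a z * r (- z + (- y + x))) =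
          (\<Sum>z\<in>UNIV. a (-y + z) * r (- (-y + z) + (- y + x)))"
      by (rule sum_UNIV_translate)
    also have "\<dots> = (\<Sum>z\<in>UNIV. a (-y + z) * r (- z + x))"
      by (simp add: minus_add add.assoc)
    finally show ?thesis .
  qed
  have "gconv v (gconv a r) x = (\<Sum>y\<in>UNIV. v y * (\<Sum>z\<in>UNIV. a (-y + z) * r (- z + x)))"
    by (simp add: gconv_def inner)
  also have "\<dots> = (\<Sum>y\<in>UNIV. \<Sum>z\<in>UNIV. v y * a (-y + z) * r (- z + x))"
    by (simp add: sum_distrib_left mult.assoc)
  also have "\<dots> = (\<Sum>z\<in>UNIV. \<Sum>y\<in>UNIV. v y * a (-y + z) * r (- z + x))"
    by (rule sum.swap)
  also have "\<dots> = gconv (gconv v a) r x"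
    by (simp add: gconv_def sum_distrib_right)
  finally show "gconv v (gconv a r) x = gconv (gconv v a) r x" .
qed

lemma right_ideal_right_annihilator:
  fixes v :: "'g::{group_add,finite} \<Rightarrow> 'k::comm_ring_1"
  shows "right_ideal (right_annihilator v)"
  unfolding right_ideal_def right_annihilator_def
  by (auto simp: gconv_zero_right gconv_add_right gconv_uminus_right gconv_assoc gconv_zero_left)

lemma right_annihilator_eq_UNIV_iff:
  fixes v :: "'g::{group_add,finite} \<Rightarrow> 'k::comm_ring_1"
  shows "right_annihilator v = UNIV \<longleftrightarrow> v = (\<lambda>_. 0)"
proof
  assume "right_annihilator v = UNIV"
  then have "gdelta 0 \<in> right_annihilator v" by blast
  then show "v = (\<lambda>_. 0)" by (simp add: right_annihilator_def)
qed (simp add: right_annihilator_def gconv_zero_left)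

interpretation funspace: vector_space "(\<lambda>c (f::'g \<Rightarrow> 'k::field) x. c * f x)"
  by unfold_locales (auto simp: fun_eq_iff plus_fun_def algebra_simps)

interpretation funspace_dual: vector_space_pair "(\<lambda>c (f::'g \<Rightarrow> 'k::field) x. c * f x)" "(*)"
  by unfold_locales (auto simp: algebra_simps)

lemma right_ideal_imp_subspace:
  fixes I :: "('g::{group_add,finite} \<Rightarrow> 'k::field) set"
  assumes "right_ideal I"
  shows "funspace.subspace I"
proof (rule funspace.subspaceI)
  have zero: "(\<lambda>_. 0) \<in> I" and add: "\<And>a b. a \<in> I \<Longrightarrow> b \<in> I \<Longrightarrow> (\<lambda>x. a x + b x) \<in> I"
    and mult: "\<And>a r. a \<in> I \<Longrightarrow> gconv a r \<in> I"
    using assms unfolding right_ideal_def by auto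
  show "0 \<in> I" using zero by (simp add: zero_fun_def)
  show "a + b \<in> I" if "a \<in> I" "b \<in> I" for a b
    using add[OF that] by (simp add: plus_fun_def)
  show "(\<lambda>x. c * a x) \<in> I" if "a \<in> I" for c a
    using mult[OF that, of "\<lambda>x. c * gdelta 0 x"] by (simp add: gconv_scale_right)
qed

lemma linear_functional_eq_sum:
  fixes g :: "('a::finite \<Rightarrow> 'k::field) \<Rightarrow> 'k"
  assumes "Vector_Spaces.linear (\<lambda>c f x. c * f x) (*) g"
  shows "g a = (\<Sum>y\<in>UNIV. a y * g (gdelta y))"
proof -
  interpret module_hom "\<lambda>c (f::'a \<Rightarrow> 'k) x. c * f x" "(*)" g
    using assms by (simp add: module_hom_iff_linear)
  have "g a = g (\<Sum>y\<in>UNIV. (\<lambda>x. a y * gdelta y x))"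
    by (subst fun_eq_sum_gdelta[of a]) (rule refl)
  also have "\<dots> = (\<Sum>y\<in>UNIV. a y * g (gdelta y))"
    by (simp add: sum scale[of _ "gdelta _", simplified])
  finally show ?thesis .
qed

lemma proper_subspace_has_orthogonal_vector:
  fixes I :: "('a::finite \<Rightarrow> 'k::field) set"
  assumes "funspace.subspace I" and "I \<noteq> UNIV"
  shows "\<exists>c. c \<noteq> (\<lambda>_. 0) \<and> (\<forall>a\<in>I. (\<Sum>y\<in>UNIV. a y * c y) = 0)"
proof -
  obtain w where w: "w \<notin> I" using assms(2) by auto
  obtain B where B: "B \<subseteq> I" "funspace.independent B" "I \<subseteq> funspace.span B"
    using funspace.maximal_independent_subset[of I] by blast
  have span_B: "funspace.span B = I"
    using funspace.span_subspace[OF B(1) B(3) assms(1)] .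
  have independent: "funspace.independent (insert w B)"
    using funspace.independent_insertI[OF _ B(2)] w span_B by simp
  obtain g where g_linear: "Vector_Spaces.linear (\<lambda>c (f::'a \<Rightarrow> 'k) x. c * f x) (*) g"
    and g_basis: "\<forall>x\<in>insert w B. g x = (if x = w then 1 else 0)"
    using funspace_dual.linear_independent_extend[OF independent, of "\<lambda>x. if x = w then 1 else 0"] by blast
  interpret module_hom "\<lambda>c (f::'a \<Rightarrow> 'k) x. c * f x" "(*)" g
    using g_linear by (simp add: module_hom_iff_linear)
  have "g b = 0" if "b \<in> B" for b
    using g_basis w B(1) that by auto
  then have g_I: "g a = 0" if "a \<in> I" for a
    using eq_0_on_span span_B that by blast
  have g_sum: "g a = (\<Sum>y\<in>UNIV. a y * g (gdelta y))" for a
    using linear_functional_eq_sum[OF g_linear] .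
  show ?thesis
  proof (intro exI conjI)
    show "(\<lambda>y. g (gdelta y)) \<noteq> (\<lambda>_. 0)"
    proof
      assume "(\<lambda>y. g (gdelta y)) = (\<lambda>_. 0)"
      then have "g w = 0" by (simp add: g_sum[of w] fun_eq_iff)
      with g_basis show False by simp
    qed
    show "\<forall>a\<in>I. (\<Sum>y\<in>UNIV. a y * g (gdelta y)) = 0"
      using g_I by (simp flip: g_sum)
  qed
qed

lemma right_ideal_subset_right_annihilator:
  fixes I :: "('g::{group_add,finite} \<Rightarrow> 'k::comm_ring_1) set"
  assumes "right_ideal I" and orth: "\<forall>a\<in>I. (\<Sum>y\<in>UNIV. a y * c y) = 0"
  shows "I \<subseteq> right_annihilator (\<lambda>y. c (- y))"
proof
  fix a assume a: "a \<in> I"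
  have "gconv (\<lambda>y. c (- y)) a x = 0" for x
  proof -
    have "gconv (\<lambda>y. c (- y)) a x = (\<Sum>z\<in>UNIV. a (z + x) * c z)"
      unfolding gconv_def
      by (rule sum.reindex_bij_witness[of _ "\<lambda>z. - z" "\<lambda>z. - z"]) (auto simp: mult.commute)
    also have "\<dots> = (\<Sum>z\<in>UNIV. gconv a (gdelta (- x)) z * c z)"
      by (simp add: gconv_gdelta_right)
    also have "\<dots> = 0"
      using orth assms(1) a unfolding right_ideal_def by blast
    finally show ?thesis .
  qed
  then show "a \<in> right_annihilator (\<lambda>y. c (- y))"
    by (auto simp: right_annihilator_def)
qed

theorem mainTheorem6:
  fixes I :: "('g::{group_add,finite} \<Rightarrow> 'k::{field,finite}) set"
  assumes "maximal_right_ideal I"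
  shows "checkable I"
proof -
  have ideal: "right_ideal I" and proper: "I \<noteq> UNIV"
    and maximal: "\<And>J. right_ideal J \<Longrightarrow> I \<subseteq> J \<Longrightarrow> J = I \<or> J = UNIV"
    using assms unfolding maximal_right_ideal_def by auto
  obtain c :: "'g \<Rightarrow> 'k" where c: "c \<noteq> (\<lambda>_. 0)" and orth: "\<forall>a\<in>I. (\<Sum>y\<in>UNIV. a y * c y) = 0"
    using proper_subspace_has_orthogonal_vector[OF right_ideal_imp_subspace[OF ideal] proper]
    by blast
  define v where "v = (\<lambda>y. c (- y))"
  have "v \<noteq> (\<lambda>_. 0)"
    using c unfolding v_def fun_eq_iff by (metis minus_minus)
  then have "right_annihilator v \<noteq> UNIV"
    by (simp add: right_annihilator_eq_UNIV_iff)
  moreover have "I \<subseteq> right_annihilator v"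
    unfolding v_def by (rule right_ideal_subset_right_annihilator[OF ideal orth])
  ultimately have "right_annihilator v = I"
    using maximal right_ideal_right_annihilator by blast
  then show ?thesis
    by (auto simp: checkable_iff_right_annihilator)
qed

end
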